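(* Let $X$ be a special (abstract) rank one group with abelian unipotent subgroups $A$ and $B$. For $1 \neq a \in A$ put $n(a) := a\, b(a)^{-1} a$. Then for all $1 \neq a_1, a_2 \in A$, $$B^{a_1 a_2 n(a_2^{-1}) a_2} = B^{a_2 a_1 n(a_1^{-1}) a_1}.$$
   Context: For a group $X$ and $g \in X$, write $B^g = g^{-1}Bg$. A group $X$ is an (abstract) rank one group with abelian unipotent subgroups $A$ and $B$ if $X = \langle A, B\rangle$ where $A$ and $B$ are different abelian subgroups of $X$ such that for each $1 \neq a \in A$ there is an element $1 \neq b \in B$ with $A^b = B^a$, and for each $1 \neq b \in B$ there is an element $1 \neq a \in A$ with $B^a = A^b$. In such a group, for each $1 \neq a \in A$ the element $1 \neq b \in B$ with $A^b = B^a$ is uniquely determined and is denoted $b(a)$. The group $X$ is called special if $b(a^{-1}) = b(a)^{-1}$ for all $1 \neq a \in A$. *)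

theory Defs
  imports "HOL-Algebra.Algebra"
begin

definition conj_set :: "('a, 'b) monoid_scheme \<Rightarrow> 'a set \<Rightarrow> 'a \<Rightarrow> 'a set" where
  "conj_set G S g = (\<lambda>s. inv\<^bsub>G\<^esub> g \<otimes>\<^bsub>G\<^esub> s \<otimes>\<^bsub>G\<^esub> g) ` S"

definition rank_one_group :: "('a, 'b) monoid_scheme \<Rightarrow> 'a set \<Rightarrow> 'a set \<Rightarrow> bool" where
  "rank_one_group G A B \<longleftrightarrow>
     group G \<and> subgroup A G \<and> subgroup B G \<and> A \<noteq> B \<and>
     (\<forall>x\<in>A. \<forall>y\<in>A. x \<otimes>\<^bsub>G\<^esub> y = y \<otimes>\<^bsub>G\<^esub> x) \<and>
     (\<forall>x\<in>B. \<forall>y\<in>B. x \<otimes>\<^bsub>G\<^esub> y = y \<otimes>\<^bsub>G\<^esub> x) \<and>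
     generate G (A \<union> B) = carrier G \<and>
     (\<forall>a\<in>A - {\<one>\<^bsub>G\<^esub>}. \<exists>b\<in>B - {\<one>\<^bsub>G\<^esub>}. conj_set G A b = conj_set G B a) \<and>
     (\<forall>b\<in>B - {\<one>\<^bsub>G\<^esub>}. \<exists>a\<in>A - {\<one>\<^bsub>G\<^esub>}. conj_set G B a = conj_set G A b)"

text \<open>b(a): the unique 1 \<noteq> b \<in> B with A^b = B^a.\<close>
definition b_of :: "('a, 'b) monoid_scheme \<Rightarrow> 'a set \<Rightarrow> 'a set \<Rightarrow> 'a \<Rightarrow> 'a" where
  "b_of G A B a = (THE b. b \<in> B - {\<one>\<^bsub>G\<^esub>} \<and> conj_set G A b = conj_set G B a)"

definition special_rank_one_group :: "('a, 'b) monoid_scheme \<Rightarrow> 'a set \<Rightarrow> 'a set \<Rightarrow> bool" where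
  "special_rank_one_group G A B \<longleftrightarrow> rank_one_group G A B \<and>
     (\<forall>a\<in>A - {\<one>\<^bsub>G\<^esub>}. b_of G A B (inv\<^bsub>G\<^esub> a) = inv\<^bsub>G\<^esub> (b_of G A B a))"

definition n_of :: "('a, 'b) monoid_scheme \<Rightarrow> 'a set \<Rightarrow> 'a set \<Rightarrow> 'a \<Rightarrow> 'a" where
  "n_of G A B a = a \<otimes>\<^bsub>G\<^esub> inv\<^bsub>G\<^esub> (b_of G A B a) \<otimes>\<^bsub>G\<^esub> a"

end

theory Submission
  imports Defs
begin

(* Write b(a) for the element of B with A^{b(a)} = B^a.  Since the
   group is special, n(a^{-1}) = a^{-1} b(a) a^{-1}, hence a n(a^{-1}) a = b(a).
   Therefore x y n(y^{-1}) y = x b(y), and conjugating B by it gives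
     B^{x b(y)} = (B^x)^{b(y)} = (A^{b(x)})^{b(y)} = A^{b(x) b(y)}.
   The right-hand side is symmetric in x and y because B is abelian, which is
   the theorem. *)

lemma conj_set_mult:
  fixes G (structure)
  assumes "group G" "S \<subseteq> carrier G" "g \<in> carrier G" "h \<in> carrier G"
  shows "conj_set G (conj_set G S g) h = conj_set G S (g \<otimes> h)"
proof -
  interpret group G by fact
  have "\<And>s. s \<in> S \<Longrightarrow> inv h \<otimes> (inv g \<otimes> s \<otimes> g) \<otimes> h = inv (g \<otimes> h) \<otimes> s \<otimes> (g \<otimes> h)"
    using assms by (auto simp: inv_mult_group m_assoc)
  then show ?thesis unfolding conj_set_def image_image by (auto intro: image_cong)
qed

lemma conj_set_one:
  fixes G (structure)
  assumes "group G" "S \<subseteq> carrier G"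
  shows "conj_set G S \<one> = S"
proof -
  interpret group G by fact
  show ?thesis unfolding conj_set_def using assms by (force simp: image_def)
qed

lemma conj_set_inv_cancel:
  fixes G (structure)
  assumes "group G" "S \<subseteq> carrier G" "g \<in> carrier G"
  shows "conj_set G (conj_set G S g) (inv g) = S"
proof -
  interpret group G by fact
  have "conj_set G (conj_set G S g) (inv g) = conj_set G S (g \<otimes> inv g)"
    using conj_set_mult[OF assms inv_closed[OF assms(3)]] .
  also have "\<dots> = S" using assms(3) conj_set_one[OF assms(1,2)] by simp
  finally show ?thesis .
qed

lemma conj_set_subgroup_self:
  fixes G (structure)
  assumes "group G" "subgroup H G" "h \<in> H"
  shows "conj_set G H h = H"
proof -
  interpret group G by fact
  have into: "conj_set G H g \<subseteq> H" if g: "g \<in> H" for g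
  proof
    fix x assume "x \<in> conj_set G H g"
    then obtain s where s: "s \<in> H" "x = inv g \<otimes> s \<otimes> g" unfolding conj_set_def by blast
    have "inv g \<in> H" using subgroup.m_inv_closed[OF assms(2) g] .
    then show "x \<in> H" using s g subgroup.m_closed[OF assms(2)] by simp
  qed
  have hc: "h \<in> carrier G" using subgroup.mem_carrier[OF assms(2,3)] .
  have ih: "inv h \<in> H" using subgroup.m_inv_closed[OF assms(2,3)] .
  have "H = conj_set G (conj_set G H (inv h)) (inv (inv h))"
    using conj_set_inv_cancel[OF assms(1) subgroup.subset[OF assms(2)] inv_closed[OF hc]] by (rule sym)
  also have "\<dots> = conj_set G (conj_set G H (inv h)) h"
    using hc by (simp only: inv_inv)
  also have "\<dots> \<subseteq> conj_set G H h"
    using into[OF ih] unfolding conj_set_def by (rule image_mono)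
  finally show ?thesis using into[OF assms(3)] by blast
qed

text \<open>In a rank one group no nontrivial element of B normalizes A: such an
  element c would give some a with B^a = A^c = A, hence B = A^{a^{-1}} = A.\<close>
lemma rank_one_B_normalizer_trivial:
  fixes G (structure)
  assumes R: "rank_one_group G A B" and c: "c \<in> B" "conj_set G A c = A"
  shows "c = \<one>"
proof (rule ccontr)
  assume c1: "c \<noteq> \<one>"
  have grp: "group G" and sA: "subgroup A G" and sB: "subgroup B G" and AB: "A \<noteq> B"
    and ex: "\<forall>b\<in>B - {\<one>}. \<exists>a\<in>A - {\<one>}. conj_set G B a = conj_set G A b"
    using R unfolding rank_one_group_def by auto
  interpret group G by (rule grp)
  obtain a where a: "a \<in> A" "conj_set G B a = A" using ex c c1 by force
  have ac: "a \<in> carrier G" using subgroup.mem_carrier[OF sA a(1)] .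
  have "B = conj_set G (conj_set G B a) (inv a)"
    using conj_set_inv_cancel[OF grp subgroup.subset[OF sB] ac] by (rule sym)
  also have "\<dots> = A"
    using a conj_set_subgroup_self[OF grp sA subgroup.m_inv_closed[OF sA a(1)]] by simp
  finally show False using AB by simp
qed

text \<open>Existence is an axiom of rank one groups; uniqueness holds
  because the quotient of two such elements normalizes A.\<close>
lemma b_of_spec:
  fixes G (structure)
  assumes R: "rank_one_group G A B" and a: "a \<in> A" "a \<noteq> \<one>"
  shows "b_of G A B a \<in> B - {\<one>}" and "conj_set G A (b_of G A B a) = conj_set G B a"
proof -
  have grp: "group G" and sA: "subgroup A G" and sB: "subgroup B G"
    and ex: "\<forall>a\<in>A - {\<one>}. \<exists>b\<in>B - {\<one>}. conj_set G A b = conj_set G B a"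
    using R unfolding rank_one_group_def by auto
  interpret group G by (rule grp)
  have Ac: "A \<subseteq> carrier G" using subgroup.subset[OF sA] .
  obtain b where b: "b \<in> B - {\<one>}" "conj_set G A b = conj_set G B a" using ex a by blast
  have unique: "b' = b" if b': "b' \<in> B - {\<one>}" "conj_set G A b' = conj_set G B a" for b'
  proof -
    have bB: "b \<in> B" "b' \<in> B" using b(1) b'(1) by simp_all
    have bc: "b \<in> carrier G" "b' \<in> carrier G"
      using subgroup.mem_carrier[OF sB bB(1)] subgroup.mem_carrier[OF sB bB(2)] .
    have "conj_set G A (b' \<otimes> inv b) = conj_set G (conj_set G A b') (inv b)"
      using conj_set_mult[OF grp Ac bc(2) inv_closed[OF bc(1)]] by simp
    also have "\<dots> = conj_set G (conj_set G A b) (inv b)" using b b' by simp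
    also have "\<dots> = A" using conj_set_inv_cancel[OF grp Ac bc(1)] .
    finally have normalizes: "conj_set G A (b' \<otimes> inv b) = A" .
    have "b' \<otimes> inv b \<in> B"
      using subgroup.m_closed[OF sB bB(2) subgroup.m_inv_closed[OF sB bB(1)]] .
    then have quot: "b' \<otimes> inv b = \<one>" by (rule rank_one_B_normalizer_trivial[OF R _ normalizes])
    have "b' = (b' \<otimes> inv b) \<otimes> b" using bc by (simp add: m_assoc)
    also have "\<dots> = b" using quot bc by simp
    finally show "b' = b" .
  qed
  have "b_of G A B a = b"
    unfolding b_of_def by (rule the_equality) (use b unique in blast)+
  then show "b_of G A B a \<in> B - {\<one>}" and "conj_set G A (b_of G A B a) = conj_set G B a"
    using b by simp_all
qed

text \<open>In a special rank one group n(a^{-1}) = a^{-1} b(a) a^{-1}, so the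
  element a n(a^{-1}) a appearing in the theorem is just b(a).\<close>
lemma special_n_of_inv:
  fixes G (structure)
  assumes S: "special_rank_one_group G A B" and a: "a \<in> A" "a \<noteq> \<one>"
  shows "a \<otimes> n_of G A B (inv a) \<otimes> a = b_of G A B a"
proof -
  have R: "rank_one_group G A B"
    and sp: "b_of G A B (inv a) = inv (b_of G A B a)"
    using S a unfolding special_rank_one_group_def by auto
  have grp: "group G" and sA: "subgroup A G" and sB: "subgroup B G"
    using R unfolding rank_one_group_def by auto
  interpret group G by (rule grp)
  have ac: "a \<in> carrier G" using subgroup.mem_carrier[OF sA a(1)] .
  have "b_of G A B a \<in> B" using b_of_spec(1)[OF R a] by simp
  then have bc: "b_of G A B a \<in> carrier G" using subgroup.mem_carrier[OF sB] by simp
  have n: "n_of G A B (inv a) = inv a \<otimes> b_of G A B a \<otimes> inv a"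
    unfolding n_of_def sp using bc by simp
  have "a \<otimes> n_of G A B (inv a) \<otimes> a = a \<otimes> (inv a \<otimes> (b_of G A B a \<otimes> (inv a \<otimes> a)))"
    unfolding n using ac bc by (simp add: m_assoc)
  also have "\<dots> = b_of G A B a" using ac bc by (simp add: m_assoc[symmetric])
  finally show ?thesis .
qed

lemma special_conj_B:
  fixes G (structure)
  assumes S: "special_rank_one_group G A B"
    and x: "x \<in> A" "x \<noteq> \<one>" and y: "y \<in> A" "y \<noteq> \<one>"
  shows "conj_set G B (x \<otimes> y \<otimes> n_of G A B (inv y) \<otimes> y)
       = conj_set G A (b_of G A B x \<otimes> b_of G A B y)"
proof -
  have R: "rank_one_group G A B" using S unfolding special_rank_one_group_def by auto
  have grp: "group G" and sA: "subgroup A G" and sB: "subgroup B G"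
    using R unfolding rank_one_group_def by auto
  interpret group G by (rule grp)
  have Ac: "A \<subseteq> carrier G" and Bc: "B \<subseteq> carrier G"
    using subgroup.subset[OF sA] subgroup.subset[OF sB] .
  have xc: "x \<in> carrier G" and yc: "y \<in> carrier G" using x y Ac by auto
  have bc: "b_of G A B x \<in> carrier G" "b_of G A B y \<in> carrier G"
    using b_of_spec(1)[OF R x] b_of_spec(1)[OF R y] Bc by auto
  have iy: "inv y \<in> A" "inv y \<noteq> \<one>"
    using subgroup.m_inv_closed[OF sA y(1)] y(2) yc by simp_all
  have nc: "n_of G A B (inv y) \<in> carrier G"
    using b_of_spec(1)[OF R iy] Bc yc unfolding n_of_def by auto
  have "x \<otimes> y \<otimes> n_of G A B (inv y) \<otimes> y = x \<otimes> (y \<otimes> n_of G A B (inv y) \<otimes> y)"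
    using xc yc nc by (simp add: m_assoc)
  also have "\<dots> = x \<otimes> b_of G A B y" using special_n_of_inv[OF S y] by simp
  finally have "conj_set G B (x \<otimes> y \<otimes> n_of G A B (inv y) \<otimes> y)
      = conj_set G (conj_set G B x) (b_of G A B y)"
    using conj_set_mult[OF grp Bc xc bc(2)] by simp
  also have "\<dots> = conj_set G (conj_set G A (b_of G A B x)) (b_of G A B y)"
    using b_of_spec(2)[OF R x] by simp
  also have "\<dots> = conj_set G A (b_of G A B x \<otimes> b_of G A B y)"
    using conj_set_mult[OF grp Ac bc] .
  finally show ?thesis .
qed

theorem lemma2p1:
  fixes G :: "('a, 'b) monoid_scheme" and A B :: "'a set" and a1 a2 :: 'a
  assumes "special_rank_one_group G A B"
    and "a1 \<in> A" and "a1 \<noteq> \<one>\<^bsub>G\<^esub>"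
    and "a2 \<in> A" and "a2 \<noteq> \<one>\<^bsub>G\<^esub>"
  shows "conj_set G B (a1 \<otimes>\<^bsub>G\<^esub> a2 \<otimes>\<^bsub>G\<^esub> n_of G A B (inv\<^bsub>G\<^esub> a2) \<otimes>\<^bsub>G\<^esub> a2)
       = conj_set G B (a2 \<otimes>\<^bsub>G\<^esub> a1 \<otimes>\<^bsub>G\<^esub> n_of G A B (inv\<^bsub>G\<^esub> a1) \<otimes>\<^bsub>G\<^esub> a1)"
proof -
  have R: "rank_one_group G A B"
    using assms(1) unfolding special_rank_one_group_def by auto
  then have B_abelian: "\<forall>x\<in>B. \<forall>y\<in>B. x \<otimes>\<^bsub>G\<^esub> y = y \<otimes>\<^bsub>G\<^esub> x"
    unfolding rank_one_group_def by auto
  have "b_of G A B a1 \<otimes>\<^bsub>G\<^esub> b_of G A B a2 = b_of G A B a2 \<otimes>\<^bsub>G\<^esub> b_of G A B a1"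
    using B_abelian b_of_spec(1)[OF R assms(2,3)] b_of_spec(1)[OF R assms(4,5)] by auto
  then show ?thesis
    unfolding special_conj_B[OF assms] special_conj_B[OF assms(1,4,5,2,3)] by simp
qed

end
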